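(* Let $R\colon\mathbb R^d\to\mathbb R$, $R(\mathbf x)=\sum_{i=1}^p\psi_i(\mathbf w_i^T\mathbf x)$ with $\mathbf w_i\in\mathbb R^d$ and convex $\psi_i\in C^{1,1}(\mathbb R)$, let $L=\mathrm{Lip}(\nabla R)$, $\lambda\ge0$, and $t\ge1$ an integer. For $\mathbf y\in\mathbb R^d$ define $\mathbf x_0=\mathbf y$ and $\mathbf x_{k+1}=\mathbf x_k-\alpha\bigl((\mathbf x_k-\mathbf y)+\lambda\nabla R(\mathbf x_k)\bigr)$, and let the $t$-step denoiser be the map $\mathbf y\mapsto\mathbf x_t$. If $\alpha\in[0,2/(2+\lambda L)]$, then the $t$-step denoiser is averaged.
   Context: A map $\mathbf D\colon\mathbb R^d\to\mathbb R^d$ is averaged if $\mathbf D=\beta\mathbf N+(1-\beta)\mathbf{Id}$ for some $\beta\in(0,1)$ and some nonexpansive (1-Lipschitz) map $\mathbf N\colon\mathbb R^d\to\mathbb R^d$. $C^{1,1}(\mathbb R)$ is the set of differentiable functions with Lipschitz-continuous derivative. *)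

theory Defs
  imports "HOL-Analysis.Analysis"
begin

definition averaged :: "('a::real_normed_vector \<Rightarrow> 'a) \<Rightarrow> bool" where
  "averaged D \<longleftrightarrow> (\<exists>\<beta>::real. 0 < \<beta> \<and> \<beta> < 1 \<and>
     (\<exists>N. (\<forall>x y. norm (N x - N y) \<le> norm (x - y)) \<and>
          (\<forall>x. D x = \<beta> *\<^sub>R N x + (1 - \<beta>) *\<^sub>R x)))"

definition Lip :: "('a::metric_space \<Rightarrow> 'b::metric_space) \<Rightarrow> real" where
  "Lip f = Inf {C. C-lipschitz_on UNIV f}"

primrec denoise_iter ::
  "real \<Rightarrow> real \<Rightarrow> ('a::real_normed_vector \<Rightarrow> 'a) \<Rightarrow> nat \<Rightarrow> 'a \<Rightarrow> 'a" where
  "denoise_iter \<alpha> lam G 0 y = y"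
| "denoise_iter \<alpha> lam G (Suc k) y =
     (let x = denoise_iter \<alpha> lam G k y in x - \<alpha> *\<^sub>R ((x - y) + lam *\<^sub>R G x))"

end

theory Submission
  imports Defs
begin

text \<open>
  The gradient of R is Lipschitz with constant L and, since R is convex, 1/L-cocoercive
  (Baillon--Haddad). One step of the iteration reads x' = S x + \<alpha> y with
  S = (1 - \<alpha>) Id - \<alpha> \<lambda> \<nabla>R, and cocoercivity makes S a (1 - \<alpha>)-contraction exactly when
  \<alpha> (2 + \<lambda> L) \<le> 2. By induction every map y \<mapsto> x_k is then nonexpansive, so
  y \<mapsto> x_t = S (x_(t-1) y) + \<alpha> y is a (1 - \<alpha>)-Lipschitz map plus \<alpha> Id, which is averaged
  with \<beta> = 1 - \<alpha>/2 (for \<alpha> = 0 the denoiser is the identity).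
\<close>

lemma lipschitz_on_Lip:
  assumes "C-lipschitz_on UNIV f"
  shows "(Lip f)-lipschitz_on UNIV f"
proof (rule lipschitz_onI)
  let ?S = "{C. C-lipschitz_on UNIV f}"
  have ne: "?S \<noteq> {}" using assms by auto
  show "0 \<le> Lip f"
    unfolding Lip_def by (rule cInf_greatest[OF ne]) (auto simp: lipschitz_on_def)
  fix x y
  show "dist (f x) (f y) \<le> Lip f * dist x y"
  proof (cases "x = y")
    case False
    then have d: "dist x y > 0" by simp
    have "dist (f x) (f y) / dist x y \<le> Lip f"
      unfolding Lip_def
    proof (rule cInf_greatest[OF ne])
      fix C assume "C \<in> ?S"
      then show "dist (f x) (f y) / dist x y \<le> C"
        using d by (auto simp: lipschitz_on_def divide_le_eq)
    qed
    then show ?thesis using d by (simp add: divide_le_eq mult.commute)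
  qed simp
qed

lemma gradient_unique:
  fixes f :: "'a::real_inner \<Rightarrow> real"
  assumes "(f has_derivative (\<lambda>h. g \<bullet> h)) (at x)" and "(f has_derivative (\<lambda>h. g' \<bullet> h)) (at x)"
  shows "g = g'"
proof -
  have "g \<bullet> h = g' \<bullet> h" for h
    using has_derivative_unique[OF assms] by metis
  then show ?thesis by (metis vector_eq_rdot)
qed

lemma descent_lemma:
  fixes f :: "'a::real_inner \<Rightarrow> real"
  assumes der: "\<And>x. (f has_derivative (\<lambda>h. g x \<bullet> h)) (at x)"
    and lip: "L-lipschitz_on UNIV g"
  shows "f v \<le> f u + g u \<bullet> (v - u) + L / 2 * (norm (v - u))\<^sup>2"
proof -
  define d where "d = v - u"
  define k where "k s = f (u + s *\<^sub>R d) - s * (g u \<bullet> d) - L / 2 * s\<^sup>2 * (norm d)\<^sup>2" for s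
  have dk: "(k has_real_derivative (g (u + s *\<^sub>R d) - g u) \<bullet> d - L * s * (norm d)\<^sup>2) (at s)" for s
  proof -
    have "((\<lambda>s. u + s *\<^sub>R d) has_derivative (\<lambda>h. h *\<^sub>R d)) (at s)"
      by (auto intro!: derivative_eq_intros)
    from has_derivative_compose[OF this der]
    have "((\<lambda>s. f (u + s *\<^sub>R d)) has_real_derivative g (u + s *\<^sub>R d) \<bullet> d) (at s)"
      unfolding has_field_derivative_def by (rule has_derivative_eq_rhs) (auto simp: mult.commute)
    then show ?thesis
      unfolding k_def by (auto intro!: derivative_eq_intros simp: inner_diff_left)
  qed
  have "(g (u + s *\<^sub>R d) - g u) \<bullet> d \<le> L * s * (norm d)\<^sup>2" if "0 \<le> s" for s
  proof -
    have "(g (u + s *\<^sub>R d) - g u) \<bullet> d \<le> norm (g (u + s *\<^sub>R d) - g u) * norm d"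
      by (rule norm_cauchy_schwarz)
    also have "\<dots> \<le> (L * norm (s *\<^sub>R d)) * norm d"
      using lipschitz_on_normD[OF lip, of "u + s *\<^sub>R d" u] by (intro mult_right_mono) auto
    finally show ?thesis using that by (simp add: power2_eq_square mult.assoc)
  qed
  then have "k 1 \<le> k 0"
    using dk by (intro DERIV_nonpos_imp_nonincreasing[of 0 1 k]) force+
  then show ?thesis by (simp add: k_def d_def)
qed

lemma gradient_cocoercive:
  fixes f :: "'a::real_inner \<Rightarrow> real"
  assumes der: "\<And>x. (f has_derivative (\<lambda>h. g x \<bullet> h)) (at x)"
    and lip: "L-lipschitz_on UNIV g"
    and tangent: "\<And>u v. f u + g u \<bullet> (v - u) \<le> f v"
  shows "(norm (g x - g y))\<^sup>2 \<le> L * ((g x - g y) \<bullet> (x - y))"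
proof (cases "L = 0")
  case True
  then show ?thesis using lipschitz_on_normD[OF lip, of x y] by simp
next
  case False
  then have L: "L > 0" using lipschitz_on_nonneg[OF lip] by simp
  have gap: "f x + g x \<bullet> (z - x) + (norm (g z - g x))\<^sup>2 / (2 * L) \<le> f z" for x z
  proof -
    define q where "q = g z - g x"
    define v where "v = z - (1 / L) *\<^sub>R q"
    have "f v \<le> f z + g z \<bullet> (v - z) + L / 2 * (norm (v - z))\<^sup>2"
      by (rule descent_lemma[OF der lip])
    moreover have "f x + g x \<bullet> (v - x) \<le> f v"
      by (rule tangent)
    moreover have "L / 2 * (norm (v - z))\<^sup>2 = (norm q)\<^sup>2 / (2 * L)"
      using L by (simp add: v_def power2_eq_square field_simps)
    moreover have "g z \<bullet> (v - z) - g x \<bullet> (v - x) = - (g x \<bullet> (z - x)) - (1 / L) * (norm q)\<^sup>2"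
      by (simp add: v_def q_def inner_diff_left inner_diff_right algebra_simps power2_norm_eq_inner)
    ultimately show ?thesis
      by (simp add: q_def field_simps)
  qed
  have "(norm (g x - g y))\<^sup>2 / L \<le> (g x - g y) \<bullet> (x - y)"
    using gap[of y x] gap[of x y]
    by (simp add: norm_minus_commute inner_diff_left inner_diff_right field_simps)
  then show ?thesis using L by (simp add: field_simps)
qed

lemma has_derivative_ridge_sum:
  fixes w :: "'i \<Rightarrow> 'a::real_inner"
  assumes "\<And>i s. i \<in> I \<Longrightarrow> (\<psi> i has_real_derivative \<psi>' i s) (at s)"
  shows "((\<lambda>x. \<Sum>i\<in>I. \<psi> i (w i \<bullet> x)) has_derivative
           (\<lambda>h. (\<Sum>i\<in>I. \<psi>' i (w i \<bullet> x) *\<^sub>R w i) \<bullet> h)) (at x)"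
proof -
  have "((\<lambda>x. \<psi> i (w i \<bullet> x)) has_derivative (\<lambda>h. \<psi>' i (w i \<bullet> x) * (w i \<bullet> h))) (at x)"
    if "i \<in> I" for i
    using has_derivative_compose[OF has_derivative_inner_right[OF has_derivative_ident]
        assms[OF that, unfolded has_field_derivative_def]]
    by blast
  then show ?thesis
    by (auto intro!: has_derivative_eq_rhs[OF has_derivative_sum] simp: inner_sum_left)
qed

lemma lipschitz_on_ridge_gradient:
  fixes w :: "'i \<Rightarrow> 'a::real_inner"
  assumes "\<And>i. i \<in> I \<Longrightarrow> (K i)-lipschitz_on UNIV (\<psi>' i)"
  shows "(\<Sum>i\<in>I. K i * (norm (w i))\<^sup>2)-lipschitz_on UNIV (\<lambda>x. \<Sum>i\<in>I. \<psi>' i (w i \<bullet> x) *\<^sub>R w i)"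
proof (rule lipschitz_onI)
  fix x y :: 'a
  have term_bound: "norm ((\<psi>' i (w i \<bullet> x) - \<psi>' i (w i \<bullet> y)) *\<^sub>R w i) \<le> K i * (norm (w i))\<^sup>2 * dist x y"
    if i: "i \<in> I" for i
  proof -
    have "\<bar>\<psi>' i (w i \<bullet> x) - \<psi>' i (w i \<bullet> y)\<bar> \<le> K i * \<bar>w i \<bullet> (x - y)\<bar>"
      using lipschitz_onD[OF assms[OF i], of "w i \<bullet> x" "w i \<bullet> y"]
      by (simp add: dist_real_def inner_diff_right)
    also have "\<dots> \<le> K i * (norm (w i) * dist x y)"
      using lipschitz_on_nonneg[OF assms[OF i]]
      by (intro mult_left_mono) (auto simp: dist_norm Cauchy_Schwarz_ineq2)
    finally have "\<bar>\<psi>' i (w i \<bullet> x) - \<psi>' i (w i \<bullet> y)\<bar> * norm (w i) \<le> K i * (norm (w i) * dist x y) * norm (w i)"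
      by (rule mult_right_mono) simp
    then show ?thesis
      by (simp add: power2_eq_square mult_ac)
  qed
  have "dist (\<Sum>i\<in>I. \<psi>' i (w i \<bullet> x) *\<^sub>R w i) (\<Sum>i\<in>I. \<psi>' i (w i \<bullet> y) *\<^sub>R w i)
      = norm (\<Sum>i\<in>I. (\<psi>' i (w i \<bullet> x) - \<psi>' i (w i \<bullet> y)) *\<^sub>R w i)"
    by (simp add: dist_norm sum_subtractf scaleR_diff_left)
  also have "\<dots> \<le> (\<Sum>i\<in>I. K i * (norm (w i))\<^sup>2 * dist x y)"
    using term_bound by (intro order_trans[OF norm_sum sum_mono])
  finally show "dist (\<Sum>i\<in>I. \<psi>' i (w i \<bullet> x) *\<^sub>R w i) (\<Sum>i\<in>I. \<psi>' i (w i \<bullet> y) *\<^sub>R w i)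
      \<le> (\<Sum>i\<in>I. K i * (norm (w i))\<^sup>2) * dist x y"
    by (simp add: sum_distrib_right)
next
  show "0 \<le> (\<Sum>i\<in>I. K i * (norm (w i))\<^sup>2)"
    using assms by (meson lipschitz_on_nonneg mult_nonneg_nonneg sum_nonneg zero_le_power2)
qed

lemma ridge_sum_above_tangent:
  fixes w :: "'i \<Rightarrow> 'a::real_inner"
  assumes "\<And>i. i \<in> I \<Longrightarrow> convex_on UNIV (\<psi> i)"
    and "\<And>i s. i \<in> I \<Longrightarrow> (\<psi> i has_real_derivative \<psi>' i s) (at s)"
  shows "(\<Sum>i\<in>I. \<psi> i (w i \<bullet> u)) + (\<Sum>i\<in>I. \<psi>' i (w i \<bullet> u) *\<^sub>R w i) \<bullet> (v - u)
           \<le> (\<Sum>i\<in>I. \<psi> i (w i \<bullet> v))"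
proof -
  have "(\<Sum>i\<in>I. \<psi>' i (w i \<bullet> u) *\<^sub>R w i) \<bullet> (v - u) = (\<Sum>i\<in>I. \<psi>' i (w i \<bullet> u) * (w i \<bullet> v - w i \<bullet> u))"
    by (simp add: inner_sum_left inner_diff_right right_diff_distrib sum_subtractf)
  also have "\<dots> \<le> (\<Sum>i\<in>I. \<psi> i (w i \<bullet> v) - \<psi> i (w i \<bullet> u))"
    using assms by (intro sum_mono convex_on_imp_above_tangent[of UNIV]) auto
  finally show ?thesis by (simp add: sum_subtractf)
qed

lemma averaged_id: "averaged (\<lambda>x. x)"
  unfolding averaged_def
  by (intro exI[of _ "1/2"] conjI exI[of _ "\<lambda>x. x"]) (auto simp: scaleR_add_left[symmetric])

lemma averaged_add_scaleR_id:
  fixes T :: "'a::real_normed_vector \<Rightarrow> 'a"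
  assumes a: "0 < a" "a \<le> 1"
    and T: "\<And>x y. norm (T x - T y) \<le> (1 - a) * norm (x - y)"
  shows "averaged (\<lambda>x. T x + a *\<^sub>R x)"
proof -
  define \<beta> where "\<beta> = 1 - a / 2"
  define N where "N x = (1 / \<beta>) *\<^sub>R (T x + (a / 2) *\<^sub>R x)" for x
  have \<beta>: "0 < \<beta>" "\<beta> < 1" using a by (auto simp: \<beta>_def)
  have "norm (N x - N y) \<le> norm (x - y)" for x y
  proof -
    have "N x - N y = (1 / \<beta>) *\<^sub>R ((T x - T y) + (a / 2) *\<^sub>R (x - y))"
      by (simp add: N_def algebra_simps)
    then have "norm (N x - N y) = (1 / \<beta>) * norm ((T x - T y) + (a / 2) *\<^sub>R (x - y))"
      using \<beta> by simp
    also have "\<dots> \<le> (1 / \<beta>) * ((1 - a) * norm (x - y) + a / 2 * norm (x - y))"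
      using \<beta> a T[of x y] norm_triangle_ineq[of "T x - T y" "(a / 2) *\<^sub>R (x - y)"]
      by (intro mult_left_mono) auto
    also have "\<dots> = norm (x - y)"
      using \<beta> by (simp add: \<beta>_def field_simps)
    finally show ?thesis .
  qed
  moreover have "T x + a *\<^sub>R x = \<beta> *\<^sub>R N x + (1 - \<beta>) *\<^sub>R x" for x
    using \<beta> by (simp add: N_def \<beta>_def scaleR_add_left[symmetric])
  ultimately show ?thesis
    unfolding averaged_def using \<beta> by blast
qed

definition denoise_step :: "real \<Rightarrow> real \<Rightarrow> ('a::real_normed_vector \<Rightarrow> 'a) \<Rightarrow> 'a \<Rightarrow> 'a" where
  "denoise_step \<alpha> lam G x = (1 - \<alpha>) *\<^sub>R x - (\<alpha> * lam) *\<^sub>R G x"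

lemma denoise_iter_Suc_step:
  "denoise_iter \<alpha> lam G (Suc k) y = denoise_step \<alpha> lam G (denoise_iter \<alpha> lam G k y) + \<alpha> *\<^sub>R y"
  by (simp add: denoise_step_def Let_def algebra_simps)

lemma step_size_le_one:
  fixes \<alpha> lam L :: real
  assumes "0 \<le> L" "0 \<le> lam" "0 \<le> \<alpha>" "\<alpha> * (2 + lam * L) \<le> 2"
  shows "\<alpha> \<le> 1"
proof -
  have "\<alpha> * 2 + \<alpha> * (lam * L) \<le> 2"
    using assms(4) by (simp add: distrib_left)
  moreover have "0 \<le> \<alpha> * (lam * L)"
    using assms(1-3) by simp
  ultimately show ?thesis
    by linarith
qed

lemma denoise_step_contraction:
  fixes G :: "'a::real_inner \<Rightarrow> 'a"
  assumes coco: "\<And>x y. (norm (G x - G y))\<^sup>2 \<le> L * ((G x - G y) \<bullet> (x - y))"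
    and "0 \<le> L" "0 \<le> lam" "0 \<le> \<alpha>" "\<alpha> * (2 + lam * L) \<le> 2"
  shows "norm (denoise_step \<alpha> lam G x - denoise_step \<alpha> lam G y) \<le> (1 - \<alpha>) * norm (x - y)"
proof -
  define a where "a = x - y"
  define g where "g = G x - G y"
  define e where "e = \<alpha> * lam"
  have "\<alpha> \<le> 1"
    using assms(2-5) by (rule step_size_le_one)
  have e: "0 \<le> e" "e * L \<le> 2 * (1 - \<alpha>)"
    using assms by (simp_all add: e_def algebra_simps)
  have cg: "(norm g)\<^sup>2 \<le> L * (g \<bullet> a)"
    using coco[of x y] by (simp add: a_def g_def)
  have ga: "0 \<le> g \<bullet> a"
  proof (cases "L = 0")
    case True
    then show ?thesis using cg by simp
  next
    case False
    have "0 \<le> L * (g \<bullet> a)" using cg by (rule order_trans[OF zero_le_power2])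
    then show ?thesis using False \<open>0 \<le> L\<close> by (simp add: zero_le_mult_iff)
  qed
  have diff: "denoise_step \<alpha> lam G x - denoise_step \<alpha> lam G y = (1 - \<alpha>) *\<^sub>R a - e *\<^sub>R g"
    by (simp add: denoise_step_def a_def g_def e_def algebra_simps)
  have "(norm (denoise_step \<alpha> lam G x - denoise_step \<alpha> lam G y))\<^sup>2
      = (1 - \<alpha>)\<^sup>2 * (norm a)\<^sup>2 - 2 * (1 - \<alpha>) * e * (g \<bullet> a) + e\<^sup>2 * (norm g)\<^sup>2"
    unfolding diff power2_norm_eq_inner
    by (simp add: inner_diff_left inner_diff_right inner_commute[of a g] power2_eq_square algebra_simps)
  also have "\<dots> \<le> (1 - \<alpha>)\<^sup>2 * (norm a)\<^sup>2"
  proof -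
    have "e\<^sup>2 * (norm g)\<^sup>2 \<le> e * (e * L) * (g \<bullet> a)"
      using mult_left_mono[OF cg, of "e\<^sup>2"] by (simp add: power2_eq_square mult_ac)
    also have "\<dots> \<le> e * (2 * (1 - \<alpha>)) * (g \<bullet> a)"
      using e ga by (intro mult_right_mono mult_left_mono) auto
    finally show ?thesis by (simp add: algebra_simps)
  qed
  finally show ?thesis
    using \<open>\<alpha> \<le> 1\<close> by (simp add: a_def power_mult_distrib[symmetric] power2_le_iff_abs_le)
qed

lemma denoise_iter_nonexpansive:
  assumes "\<alpha> \<le> 1" "0 \<le> \<alpha>"
    and step: "\<And>x y. norm (denoise_step \<alpha> lam G x - denoise_step \<alpha> lam G y) \<le> (1 - \<alpha>) * norm (x - y)"
  shows "norm (denoise_iter \<alpha> lam G k u - denoise_iter \<alpha> lam G k v) \<le> norm (u - v)"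
proof (induction k)
  case (Suc k)
  let ?S = "denoise_step \<alpha> lam G" and ?D = "denoise_iter \<alpha> lam G k"
  have "denoise_iter \<alpha> lam G (Suc k) u - denoise_iter \<alpha> lam G (Suc k) v
      = (?S (?D u) - ?S (?D v)) + \<alpha> *\<^sub>R (u - v)"
    unfolding denoise_iter_Suc_step by (simp add: algebra_simps)
  then have "norm (denoise_iter \<alpha> lam G (Suc k) u - denoise_iter \<alpha> lam G (Suc k) v)
      \<le> norm (?S (?D u) - ?S (?D v)) + norm (\<alpha> *\<^sub>R (u - v))"
    by (metis norm_triangle_ineq)
  also have "\<dots> \<le> (1 - \<alpha>) * norm (u - v) + \<alpha> * norm (u - v)"
  proof (rule add_mono)
    show "norm (?S (?D u) - ?S (?D v)) \<le> (1 - \<alpha>) * norm (u - v)"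
      using step[of "?D u" "?D v"] mult_left_mono[OF Suc.IH, of "1 - \<alpha>"] assms by linarith
  qed (use assms in simp)
  also have "\<dots> = norm (u - v)"
    by (simp add: algebra_simps)
  finally show ?case .
qed simp

lemma averaged_denoise_iter:
  assumes "t \<ge> 1" "\<alpha> \<le> 1" "0 \<le> \<alpha>"
    and step: "\<And>x y. norm (denoise_step \<alpha> lam G x - denoise_step \<alpha> lam G y) \<le> (1 - \<alpha>) * norm (x - y)"
  shows "averaged (denoise_iter \<alpha> lam G t)"
proof (cases "\<alpha> = 0")
  case True
  have "denoise_iter \<alpha> lam G k y = y" for k y
    by (induction k) (simp_all add: True)
  then have "denoise_iter \<alpha> lam G t = (\<lambda>y. y)"
    by (rule ext)
  then show ?thesis
    by (simp add: averaged_id)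
next
  case False
  obtain k where t: "t = Suc k" using \<open>t \<ge> 1\<close> by (cases t) auto
  let ?T = "\<lambda>x. denoise_step \<alpha> lam G (denoise_iter \<alpha> lam G k x)"
  have "norm (?T x - ?T y) \<le> (1 - \<alpha>) * norm (x - y)" for x y
  proof -
    have "norm (?T x - ?T y) \<le> (1 - \<alpha>) * norm (denoise_iter \<alpha> lam G k x - denoise_iter \<alpha> lam G k y)"
      by (rule step)
    also have "\<dots> \<le> (1 - \<alpha>) * norm (x - y)"
      using denoise_iter_nonexpansive[OF assms(2-4)] assms(2) by (simp add: mult_left_mono)
    finally show ?thesis .
  qed
  then have "averaged (\<lambda>x. ?T x + \<alpha> *\<^sub>R x)"
    using False assms by (intro averaged_add_scaleR_id) auto
  moreover have "denoise_iter \<alpha> lam G t = (\<lambda>x. ?T x + \<alpha> *\<^sub>R x)"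
    by (rule ext) (simp only: t denoise_iter_Suc_step)
  ultimately show ?thesis
    by simp
qed

theorem proposition6:
  fixes w :: "nat \<Rightarrow> real ^ 'd"
    and \<psi> \<psi>' :: "nat \<Rightarrow> real \<Rightarrow> real"
    and p t :: nat and lam \<alpha> :: real
    and R :: "real ^ 'd \<Rightarrow> real" and gradR :: "real ^ 'd \<Rightarrow> real ^ 'd"
  assumes R_def: "\<And>x. R x = (\<Sum>i=1..p. \<psi> i (w i \<bullet> x))"
    and convex: "\<And>i. i \<in> {1..p} \<Longrightarrow> convex_on UNIV (\<psi> i)"
    and deriv: "\<And>i s. i \<in> {1..p} \<Longrightarrow> (\<psi> i has_real_derivative \<psi>' i s) (at s)"
    and C11: "\<And>i. i \<in> {1..p} \<Longrightarrow> \<exists>K. K-lipschitz_on UNIV (\<psi>' i)"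
    and gradR: "\<And>x. (R has_derivative (\<lambda>h. gradR x \<bullet> h)) (at x)"
    and lam: "lam \<ge> 0"
    and t: "t \<ge> 1"
    and alpha: "0 \<le> \<alpha>" "\<alpha> \<le> 2 / (2 + lam * Lip gradR)"
  shows "averaged (denoise_iter \<alpha> lam gradR t)"
proof -
  obtain K where K: "\<And>i. i \<in> {1..p} \<Longrightarrow> (K i)-lipschitz_on UNIV (\<psi>' i)"
    using C11 by metis
  have R_eq: "R = (\<lambda>x. \<Sum>i=1..p. \<psi> i (w i \<bullet> x))"
    using R_def by blast
  have grad_eq: "gradR = (\<lambda>x. \<Sum>i=1..p. \<psi>' i (w i \<bullet> x) *\<^sub>R w i)"
    by (rule ext gradient_unique[OF gradR[unfolded R_eq] has_derivative_ridge_sum])+ (rule deriv)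
  define L where "L = Lip gradR"
  have lip: "L-lipschitz_on UNIV gradR"
    unfolding L_def grad_eq by (rule lipschitz_on_Lip[OF lipschitz_on_ridge_gradient[OF K]])
  have tangent: "R u + gradR u \<bullet> (v - u) \<le> R v" for u v
    unfolding R_eq grad_eq using convex deriv by (rule ridge_sum_above_tangent)
  have L_nonneg: "0 \<le> L"
    using lipschitz_on_nonneg[OF lip] .
  have coco: "(norm (gradR x - gradR y))\<^sup>2 \<le> L * ((gradR x - gradR y) \<bullet> (x - y))" for x y
    by (rule gradient_cocoercive[OF gradR lip tangent])
  have "0 < 2 + lam * L"
    using lam L_nonneg by (simp add: add_pos_nonneg)
  then have alpha_L: "\<alpha> * (2 + lam * L) \<le> 2"
    using alpha(2) by (simp add: L_def le_divide_eq)
  show ?thesis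
    using t step_size_le_one[OF L_nonneg lam alpha(1) alpha_L] alpha(1)
      denoise_step_contraction[OF coco L_nonneg lam alpha(1) alpha_L]
    by (rule averaged_denoise_iter)
qed

end
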